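(* Let $K$ be a field of characteristic zero, $n\ge4$ even, and $\mathfrak{g}$ a filiform Lie algebra of dimension $n$ whose associated graded Lie algebra is isomorphic to $Q_n$; concretely, $\mathfrak{g}$ has an adapted basis $\{e_1,\dots,e_n\}$ in which $[e_i,e_{n+1-i}]=(-1)^ie_n$ for $2\le i\le n-1$. Then $\chi(\mathfrak{g})=2$.
   Context: A filiform Lie algebra of dimension $n$ is a nilpotent Lie algebra with $\dim\mathfrak{g}^k=n-k$ for $2\le k\le n$ (lower central series $\mathfrak{g}^1=\mathfrak{g}$, $\mathfrak{g}^{k+1}=[\mathfrak{g},\mathfrak{g}^k]$). An adapted basis is a basis $\{e_1,\dots,e_n\}$ with $[e_1,e_i]=e_{i+1}$ ($2\le i\le n-1$), $[e_1,e_n]=0$, $[e_2,e_3]\in\langle e_5,\dots,e_n\rangle$; for such a basis one has $[e_i,e_j]\in\langle e_{i+j},\dots,e_n\rangle$ if $i+j\le n$ and $[e_i,e_j]=0$ if $i+j>n+1$. For even $n$, $Q_n$ is the Lie algebra with basis $e_1,\dots,e_n$ and nonzero brackets $[e_1,e_i]=e_{i+1}$ ($2\le i\le n-1$) and $[e_i,e_{n+1-i}]=(-1)^ie_n$ ($2\le i\le n/2$). For $\ell\in\mathfrak{g}^*$, $\mathfrak{g}(\ell)=\{y\in\mathfrak{g}\mid\ell([x,y])=0\ \forall x\in\mathfrak{g}\}$ and $\chi(\mathfrak{g})=\min_{\ell\in\mathfrak{g}^*}\dim\mathfrak{g}(\ell)$. *)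

theory Defs
  imports Complex_Main
begin

definition lie_algebra ::
  "('k::field \<Rightarrow> 'v::ab_group_add \<Rightarrow> 'v) \<Rightarrow> ('v \<Rightarrow> 'v \<Rightarrow> 'v) \<Rightarrow> bool" where
  "lie_algebra scale br \<longleftrightarrow>
     vector_space scale \<and>
     (\<forall>x. Vector_Spaces.linear scale scale (br x)) \<and>
     (\<forall>y. Vector_Spaces.linear scale scale (\<lambda>x. br x y)) \<and>
     (\<forall>x. br x x = 0) \<and>
     (\<forall>x y z. br x (br y z) + br y (br z x) + br z (br x y) = 0)"

fun lcs :: "('k::field \<Rightarrow> 'v::ab_group_add \<Rightarrow> 'v) \<Rightarrow> ('v \<Rightarrow> 'v \<Rightarrow> 'v) \<Rightarrow> nat \<Rightarrow> 'v set" where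
  "lcs scale br 0 = UNIV"
| "lcs scale br (Suc 0) = UNIV"
| "lcs scale br (Suc (Suc k)) =
     module.span scale {br x y | x y. y \<in> lcs scale br (Suc k)}"

definition nilpotent_lie :: "('k::field \<Rightarrow> 'v::ab_group_add \<Rightarrow> 'v) \<Rightarrow> ('v \<Rightarrow> 'v \<Rightarrow> 'v) \<Rightarrow> bool" where
  "nilpotent_lie scale br \<longleftrightarrow> (\<exists>k\<ge>1. lcs scale br k = {0})"

definition filiform :: "('k::field \<Rightarrow> 'v::ab_group_add \<Rightarrow> 'v) \<Rightarrow> ('v \<Rightarrow> 'v \<Rightarrow> 'v) \<Rightarrow> nat \<Rightarrow> bool" where
  "filiform scale br n \<longleftrightarrow>
     lie_algebra scale br \<and> vector_space.dim scale (UNIV::'v set) = n \<and>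
     nilpotent_lie scale br \<and>
     (\<forall>k. 2 \<le> k \<and> k \<le> n \<longrightarrow> vector_space.dim scale (lcs scale br k) = n - k)"

definition is_basis_seq :: "('k::field \<Rightarrow> 'v::ab_group_add \<Rightarrow> 'v) \<Rightarrow> nat \<Rightarrow> (nat \<Rightarrow> 'v) \<Rightarrow> bool" where
  "is_basis_seq scale n e \<longleftrightarrow>
     inj_on e {1..n} \<and> \<not> module.dependent scale (e ` {1..n}) \<and>
     module.span scale (e ` {1..n}) = UNIV"

definition adapted_basis :: "('k::field \<Rightarrow> 'v::ab_group_add \<Rightarrow> 'v) \<Rightarrow> ('v \<Rightarrow> 'v \<Rightarrow> 'v) \<Rightarrow> nat \<Rightarrow> (nat \<Rightarrow> 'v) \<Rightarrow> bool" where
  "adapted_basis scale br n e \<longleftrightarrow>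
     is_basis_seq scale n e \<and>
     (\<forall>i. 2 \<le> i \<and> i \<le> n - 1 \<longrightarrow> br (e 1) (e i) = e (i + 1)) \<and>
     br (e 1) (e n) = 0 \<and>
     br (e 2) (e 3) \<in> module.span scale (e ` {5..n})"

definition stabilizer :: "('v \<Rightarrow> 'v \<Rightarrow> 'v) \<Rightarrow> ('v \<Rightarrow> 'k::zero) \<Rightarrow> 'v set" where
  "stabilizer br l = {y. \<forall>x. l (br x y) = 0}"

definition chi :: "('k::field \<Rightarrow> 'v::ab_group_add \<Rightarrow> 'v) \<Rightarrow> ('v \<Rightarrow> 'v \<Rightarrow> 'v) \<Rightarrow> nat" where
  "chi scale br = (LEAST d. \<exists>l. Vector_Spaces.linear scale (*) l \<and>
                              vector_space.dim scale (stabilizer br l) = d)"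

end

theory Submission
  imports Defs
begin

(* For a linear functional l, the form (x, y) |-> l [x, y] is alternating with radical g(l),
   so dim g - dim g(l) is even; as n is even, so is dim g(l).  The vector e_n is central, hence
   lies in every g(l), and therefore chi(g) >= 2.
   Conversely take l = e_n^*.  Since the lower central series is a filtration and e_j lies in
   its (j-1)-st term, [e_i, e_j] = 0 whenever i + j > n + 1.  Pairing with e_(n+1-j), whose
   bracket with e_j has a nonzero e_n-coordinate, then detects the e_j-coordinate triangularly,
   so g(l) meets span {e_2, ..., e_(n-1)} trivially and dim g(l) <= 2. *)

lemma (in finite_dimensional_vector_space) dim_sums_eq_add_if_Int_zero:
  assumes "subspace S" "subspace T" "S \<inter> T \<subseteq> {0}"
  shows "dim {x + y |x y. x \<in> S \<and> y \<in> T} = dim S + dim T"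
proof -
  have "dim (S \<inter> T) = 0" using assms(3) by (simp only: dim_eq_0)
  then show ?thesis using dim_sums_Int[OF assms(1,2)] by linarith
qed

locale alternating_form = finite_dimensional_vector_space scale Basis
  for scale :: "'a::field \<Rightarrow> 'b::ab_group_add \<Rightarrow> 'b" (infixr \<open>*s\<close> 75) and Basis :: "'b set" +
  fixes B :: "'b \<Rightarrow> 'b \<Rightarrow> 'a"
  assumes add_left: "B (x + y) z = B x z + B y z"
    and scale_left: "B (c *s x) z = c * B x z"
    and add_right: "B x (y + z) = B x y + B x z"
    and scale_right: "B x (c *s y) = c * B x y"
    and alternating [simp]: "B x x = 0"
begin

lemma zero_right [simp]: "B x 0 = 0"
  using scale_right[of x 0 0] by simp

lemma diff_left: "B (x - y) z = B x z - B y z"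
  by (metis add_diff_cancel add_left diff_add_cancel)

lemma diff_right: "B x (y - z) = B x y - B x z"
  by (metis add_diff_cancel add_right diff_add_cancel)

lemma skew: "B x y = - B y x"
proof -
  have "B x y + B y x = 0"
    using alternating[of "x + y"] unfolding add_left add_right by (simp add: add.commute)
  then show ?thesis by (metis eq_neg_iff_add_eq_0)
qed

lemmas bilinear_simps = add_left scale_left add_right scale_right diff_left diff_right

definition perp :: "'b set \<Rightarrow> 'b set \<Rightarrow> 'b set" where
  "perp S X = {z \<in> S. \<forall>x\<in>X. B x z = 0}"

lemma subspace_perp: "subspace S \<Longrightarrow> subspace (perp S X)"
  unfolding subspace_def perp_def by (auto simp: bilinear_simps)

context
  fixes S x y
  assumes S: "subspace S" and x: "x \<in> S" and y: "y \<in> S" and xy: "B x y = 1"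
begin

lemma hyperbolic_pair_swap: "B y x = -1"
  by (simp add: skew[of y x] xy)

lemma perp_hyperbolic_pair_projection:
  assumes "z \<in> S"
  shows "z - B x z *s y + B y z *s x \<in> perp S {x, y}"
  using assms S x y xy hyperbolic_pair_swap
  by (simp add: perp_def bilinear_simps subspace_add subspace_diff subspace_scale)

lemma sums_perp_span_hyperbolic_pair:
  "{u + v |u v. u \<in> perp S {x, y} \<and> v \<in> span {x, y}} = S"
proof (intro antisym subsetI)
  fix z assume "z \<in> {u + v |u v. u \<in> perp S {x, y} \<and> v \<in> span {x, y}}"
  moreover have "span {x, y} \<subseteq> S" using S x y by (simp add: span_minimal)
  ultimately show "z \<in> S" using S by (auto simp: perp_def subspace_add)
next
  fix z assume z: "z \<in> S"
  have "B x z *s y - B y z *s x \<in> span {x, y}"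
    by (intro span_diff span_scale span_base) auto
  with perp_hyperbolic_pair_projection[OF z]
  show "z \<in> {u + v |u v. u \<in> perp S {x, y} \<and> v \<in> span {x, y}}"
    by (force simp: algebra_simps)
qed

lemma perp_Int_span_hyperbolic_pair: "perp S {x, y} \<inter> span {x, y} \<subseteq> {0}"
proof
  fix w assume w: "w \<in> perp S {x, y} \<inter> span {x, y}"
  then obtain a b where "w - a *s x = b *s y"
    by (auto simp: span_breakdown_eq span_singleton)
  then have w_eq: "w = a *s x + b *s y" by (simp add: algebra_simps)
  have "B x w = 0" "B y w = 0" using w by (auto simp: perp_def)
  then have "a = 0" "b = 0" using xy hyperbolic_pair_swap by (auto simp: w_eq bilinear_simps)
  then show "w \<in> {0}" using w_eq by simp
qed

lemma dim_hyperbolic_pair: "dim {x, y} = 2"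
proof -
  have "y \<noteq> 0" using xy by auto
  moreover have "x \<notin> span {y}"
    using xy by (auto simp: span_singleton scale_left)
  ultimately show ?thesis by (simp add: dim_insert)
qed

lemma dim_perp_hyperbolic_pair: "dim S = dim (perp S {x, y}) + 2"
  using dim_sums_eq_add_if_Int_zero[OF subspace_perp[OF S] subspace_span perp_Int_span_hyperbolic_pair]
  by (simp add: sums_perp_span_hyperbolic_pair dim_hyperbolic_pair)

lemma radical_perp_hyperbolic_pair: "perp (perp S {x, y}) (perp S {x, y}) = perp S S"
proof (intro antisym subsetI)
  fix z assume z: "z \<in> perp (perp S {x, y}) (perp S {x, y})"
  have "B w z = 0" if w: "w \<in> S" for w
  proof -
    let ?p = "w - B x w *s y + B y w *s x"
    have "w = ?p + B x w *s y - B y w *s x" by simp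
    then have "B w z = B ?p z + B x w * B y z - B y w * B x z"
      by (metis add_left scale_left diff_left)
    also have "\<dots> = 0"
      using z perp_hyperbolic_pair_projection[OF w] by (auto simp: perp_def)
    finally show ?thesis .
  qed
  then show "z \<in> perp S S" using z by (auto simp: perp_def)
qed (use x y in \<open>auto simp: perp_def\<close>)

end

text \<open>Splitting off hyperbolic planes until the form vanishes identically.\<close>
theorem even_dim_diff_radical:
  assumes "subspace S"
  shows "even (dim S - dim (perp S S))"
  using assms
proof (induction "dim S" arbitrary: S rule: less_induct)
  case (less S)
  show ?case
  proof (cases "\<forall>x\<in>S. \<forall>y\<in>S. B x y = 0")
    case True
    then have "perp S S = S" by (auto simp: perp_def)
    then show ?thesis by simp
  next
    case False
    then obtain x y0 where x: "x \<in> S" and y0: "y0 \<in> S" and nz: "B x y0 \<noteq> 0" by blast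
    define y where "y = inverse (B x y0) *s y0"
    have y: "y \<in> S" using y0 less.prems by (simp add: y_def subspace_scale)
    have xy: "B x y = 1" using nz by (simp add: y_def scale_right)
    let ?S' = "perp S {x, y}"
    have dim_S: "dim S = dim ?S' + 2"
      using dim_perp_hyperbolic_pair[OF less.prems x y xy] .
    have "dim (perp ?S' ?S') \<le> dim ?S'"
      by (rule dim_subset) (auto simp: perp_def)
    moreover have "even (dim ?S' - dim (perp ?S' ?S'))"
      using less.hyps[of ?S'] dim_S subspace_perp[OF less.prems] by simp
    ultimately show ?thesis
      using dim_S radical_perp_hyperbolic_pair[OF less.prems x y xy]
      by (simp add: Suc_diff_le)
  qed
qed

end

lemma chi_eqI:
  assumes "\<And>l. Vector_Spaces.linear scale (*) l \<Longrightarrow> d \<le> vector_space.dim scale (stabilizer br l)"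
    and "Vector_Spaces.linear scale (*) l" and "vector_space.dim scale (stabilizer br l) = d"
  shows "chi scale br = d"
  unfolding chi_def
  by (rule Least_equality) (use assms in blast)+

locale lie_alg =
  fixes scale :: "'k::field \<Rightarrow> 'v::ab_group_add \<Rightarrow> 'v" (infixr \<open>*s\<close> 75)
    and br :: "'v \<Rightarrow> 'v \<Rightarrow> 'v"
  assumes lie_algebra: "lie_algebra scale br"
begin

sublocale vector_space scale
  using lie_algebra by (simp add: lie_algebra_def)

lemma module_hom_br_right: "module_hom scale scale (br x)"
  using lie_algebra by (simp add: lie_algebra_def linear_iff_module_hom)

lemma module_hom_br_left: "module_hom scale scale (\<lambda>x. br x y)"
  using lie_algebra by (simp add: lie_algebra_def linear_iff_module_hom)

lemmas br_add_right = module_hom.add[OF module_hom_br_right]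
  and br_scale_right = module_hom.scale[OF module_hom_br_right]
  and br_neg_right = module_hom.neg[OF module_hom_br_right]
  and br_sum_right = module_hom.sum[OF module_hom_br_right]
  and br_zero_right [simp] = module_hom.zero[OF module_hom_br_right]
  and br_add_left = module_hom.add[OF module_hom_br_left]
  and br_scale_left = module_hom.scale[OF module_hom_br_left]
  and br_zero_left [simp] = module_hom.zero[OF module_hom_br_left]

lemma br_self [simp]: "br x x = 0"
  using lie_algebra by (simp add: lie_algebra_def)

lemma br_skew: "br x y = - br y x"
proof -
  have "br x y + br y x = 0"
    using br_self[of "x + y"] unfolding br_add_left br_add_right by (simp add: add.commute)
  then show ?thesis by (metis eq_neg_iff_add_eq_0)
qed

lemma br_br_left: "br (br x y) z = br x (br y z) - br y (br x z)"
proof -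
  have "br x (br y z) + br y (br z x) + br z (br x y) = 0"
    using lie_algebra by (simp add: lie_algebra_def)
  moreover have "br y (br z x) = - br y (br x z)"
    by (simp add: br_skew[of z x] br_neg_right)
  moreover have "br z (br x y) = - br (br x y) z"
    by (rule br_skew)
  ultimately show ?thesis
    by (simp add: algebra_simps eq_neg_iff_add_eq_0)
qed

lemma subspace_lcs: "subspace (lcs scale br k)"
  by (cases "(scale, br, k)" rule: lcs.cases) (auto simp: subspace_UNIV)

lemma br_mem_lcs_Suc: "y \<in> lcs scale br k \<Longrightarrow> 1 \<le> k \<Longrightarrow> br x y \<in> lcs scale br (Suc k)"
  by (cases k) (auto intro: span_base)

lemma lcs_Suc_subset: "lcs scale br (Suc k) \<subseteq> lcs scale br k"
proof (induction k)
  case (Suc k)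
  then show ?case by (cases k) (auto intro!: span_mono)
qed simp

lemma lcs_antimono: "k \<le> m \<Longrightarrow> lcs scale br m \<subseteq> lcs scale br k"
  by (rule lift_Suc_antimono_le[of "lcs scale br"]) (use lcs_Suc_subset in auto)

text \<open>Induction on \<open>i\<close> for all \<open>j\<close>: on a generator \<open>br u w\<close> of \<open>lcs (i + 1)\<close>,
  the Jacobi identity \<open>br_br_left\<close> reduces the claim to the cases \<open>(i, j)\<close> and \<open>(i, j + 1)\<close>.\<close>
lemma br_mem_lcs_add:
  assumes "1 \<le> i" "1 \<le> j" "x \<in> lcs scale br i" "y \<in> lcs scale br j"
  shows "br x y \<in> lcs scale br (i + j)"
  using assms
proof (induction i arbitrary: x y j rule: nat_induct_at_least)
  case base
  then show ?case using br_mem_lcs_Suc by simp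
next
  case (Suc i)
  have "x \<in> span {br u w |u w. w \<in> lcs scale br i}"
    using Suc.prems(2) Suc.hyps by (cases i) auto
  then show ?case
  proof (induction rule: span_induct)
    case base
    show ?case
      using subspace_lcs[of "Suc i + j"]
      by (auto simp: subspace_def br_add_left br_scale_left)
  next
    case (step v)
    then obtain u w where v: "v = br u w" and w: "w \<in> lcs scale br i" by blast
    have "br u (br w y) \<in> lcs scale br (Suc i + j)"
      using Suc.IH[OF Suc.prems(1) w Suc.prems(3)] br_mem_lcs_Suc Suc.hyps by simp
    moreover have "br w (br u y) \<in> lcs scale br (Suc i + j)"
      using Suc.IH[OF _ w br_mem_lcs_Suc[OF Suc.prems(3,1)]] by simp
    ultimately show ?case
      by (simp add: v br_br_left subspace_diff subspace_lcs)
  qed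
qed

end

locale filiform_adapted =
  fixes scale :: "'k::field \<Rightarrow> 'v::ab_group_add \<Rightarrow> 'v" (infixr \<open>*s\<close> 75)
    and br :: "'v \<Rightarrow> 'v \<Rightarrow> 'v" and n :: nat and e :: "nat \<Rightarrow> 'v"
  assumes filiform: "filiform scale br n"
    and adapted: "adapted_basis scale br n e"
begin

sublocale lie_alg scale br
  using filiform by unfold_locales (simp add: filiform_def)

lemma inj_on_basis: "inj_on e {1..n}"
  and independent_basis: "independent (e ` {1..n})"
  and span_basis: "span (e ` {1..n}) = UNIV"
  and br_first_basis: "2 \<le> i \<Longrightarrow> i \<le> n - 1 \<Longrightarrow> br (e 1) (e i) = e (i + 1)"
  and br_first_top: "br (e 1) (e n) = 0"
  using adapted by (auto simp: adapted_basis_def is_basis_seq_def)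

sublocale finite_dimensional_vector_space scale "e ` {1..n}"
  by unfold_locales (use independent_basis span_basis in auto)

lemma dim_UNIV_eq: "dim UNIV = n"
  using filiform by (simp add: filiform_def)

lemma lcs_n_eq_zero:
  assumes "2 \<le> n"
  shows "lcs scale br n = {0}"
proof -
  have "dim (lcs scale br n) = 0"
    using filiform assms by (simp add: filiform_def)
  then show ?thesis
    using subspace_0[OF subspace_lcs] by (auto simp only: dim_eq_0)
qed

lemma basis_mem_lcs: "2 \<le> j \<Longrightarrow> j \<le> n \<Longrightarrow> e j \<in> lcs scale br (j - 1)"
proof (induction j rule: nat_induct_at_least)
  case (Suc j)
  then show ?case
    using br_mem_lcs_Suc[of "e j" "j - 1" "e 1"] br_first_basis[of j] by simp
qed simp

lemma br_basis_eq_zero: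
  assumes "2 \<le> i" "2 \<le> j" "i \<le> n" "j \<le> n" "n + 2 \<le> i + j"
  shows "br (e i) (e j) = 0"
proof -
  have "br (e i) (e j) \<in> lcs scale br ((i - 1) + (j - 1))"
    using assms by (intro br_mem_lcs_add basis_mem_lcs) auto
  also have "\<dots> \<subseteq> lcs scale br n"
    using assms by (intro lcs_antimono) simp
  finally show ?thesis
    using assms lcs_n_eq_zero by simp
qed

lemma br_top_eq_zero: "br x (e n) = 0"
proof -
  have "x \<in> span (e ` {1..n})" using span_basis by simp
  then show ?thesis
  proof (induction rule: span_induct)
    case base
    show ?case by (auto simp: subspace_def br_add_left br_scale_left)
  next
    case (step v)
    then obtain i where "1 \<le> i" "i \<le> n" "v = e i" by auto
    then show ?case
      using br_first_top br_basis_eq_zero[of i n] by (cases "i = 1") auto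
  qed
qed

lemma basis_top_neq_zero: "1 \<le> n \<Longrightarrow> e n \<noteq> 0"
  using independent_basis dependent_zero by force

lemma even_codim_stabilizer:
  assumes "Vector_Spaces.linear scale (*) l"
  shows "even (n - dim (stabilizer br l))"
proof -
  have l: "module_hom scale (*) l"
    using assms by (simp add: linear_iff_module_hom)
  interpret alternating_form scale "e ` {1..n}" "\<lambda>x y. l (br x y)"
    by unfold_locales
      (simp_all add: br_add_left br_add_right br_scale_left br_scale_right
        module_hom.add[OF l] module_hom.scale[OF l] module_hom.zero[OF l])
  have "perp UNIV UNIV = stabilizer br l"
    by (simp add: perp_def stabilizer_def)
  then show ?thesis
    using even_dim_diff_radical[OF subspace_UNIV] dim_UNIV_eq by simp
qed

lemma two_le_dim_stabilizer:
  assumes "even n" "1 \<le> n" and l: "Vector_Spaces.linear scale (*) l"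
  shows "2 \<le> dim (stabilizer br l)"
proof -
  have "e n \<in> stabilizer br l"
    using module_hom.zero[OF l[unfolded linear_iff_module_hom]]
    by (simp add: stabilizer_def br_top_eq_zero)
  then have "dim (stabilizer br l) \<noteq> 0"
    using basis_top_neq_zero[OF assms(2)] by (auto simp only: dim_eq_0)
  moreover have "dim (stabilizer br l) \<le> n"
    using dim_subset[of "stabilizer br l" UNIV] dim_UNIV_eq by simp
  ultimately show ?thesis
    using even_codim_stabilizer[OF l] \<open>even n\<close>
    by (auto simp del: dim_eq_0 simp: even_diff_nat elim!: evenE)
qed

definition top_coord :: "'v \<Rightarrow> 'k" where
  "top_coord v = representation (e ` {1..n}) v (e n)"

lemma linear_top_coord: "Vector_Spaces.linear scale (*) top_coord"
  unfolding top_coord_def[abs_def]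
  by (rule linear_representation[OF independent_basis span_basis])

lemmas top_coord_zero [simp] = module_hom.zero[OF linear_top_coord[unfolded linear_iff_module_hom]]
  and top_coord_add = module_hom.add[OF linear_top_coord[unfolded linear_iff_module_hom]]
  and top_coord_scale = module_hom.scale[OF linear_top_coord[unfolded linear_iff_module_hom]]
  and top_coord_sum = module_hom.sum[OF linear_top_coord[unfolded linear_iff_module_hom]]

lemma top_coord_basis:
  assumes "1 \<le> j" "j \<le> n"
  shows "top_coord (e j) = (if j = n then 1 else 0)"
proof -
  have "e n = e j \<longleftrightarrow> j = n"
    using inj_on_basis assms by (auto dest: inj_onD)
  then show ?thesis
    using representation_basis[OF independent_basis, of "e j"] assms
    by (simp add: top_coord_def)
qed

text \<open>Writing \<open>y = (\<Sum>i. c i *s e i)\<close>, pairing with \<open>e (n + 1 - j)\<close> kills every term with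
  \<open>i > j\<close>, so the coefficients vanish one by one, starting from the smallest index.\<close>
lemma stabilizer_top_coord_Int_span_middle:
  assumes pair: "\<And>i. 2 \<le> i \<Longrightarrow> i \<le> n - 1 \<Longrightarrow> top_coord (br (e i) (e (n + 1 - i))) \<noteq> 0"
  shows "stabilizer br top_coord \<inter> span (e ` {2..n-1}) \<subseteq> {0}"
proof
  fix y assume y: "y \<in> stabilizer br top_coord \<inter> span (e ` {2..n-1})"
  have inj: "inj_on e {2..n-1}"
    using inj_on_basis by (rule inj_on_subset) auto
  obtain u where "y = (\<Sum>v\<in>e ` {2..n-1}. u v *s v)"
    using y span_finite[of "e ` {2..n-1}"] by auto
  then obtain c where y_eq: "y = (\<Sum>i\<in>{2..n-1}. c i *s e i)"
    using sum.reindex[OF inj, of "\<lambda>v. u v *s v"] by auto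
  have c_zero: "c j = 0" if "2 \<le> j" "j \<le> n - 1" for j
    using that
  proof (induction j rule: less_induct)
    case (less j)
    define m where "m = n + 1 - j"
    have m: "2 \<le> m" "m \<le> n - 1" "n + 1 - m = j"
      using less.prems by (auto simp: m_def)
    have others: "c i * top_coord (br (e m) (e i)) = 0" if i: "i \<in> {2..n-1} - {j}" for i
    proof (cases "i < j")
      case True
      then show ?thesis using less.IH[of i] i by simp
    next
      case False
      then have "br (e m) (e i) = 0"
        using i m by (intro br_basis_eq_zero) (auto simp: m_def)
      then show ?thesis by simp
    qed
    have "0 = top_coord (br (e m) y)"
      using y by (simp add: stabilizer_def)
    also have "\<dots> = (\<Sum>i\<in>{2..n-1}. c i * top_coord (br (e m) (e i)))"
      by (simp add: y_eq br_sum_right br_scale_right top_coord_sum top_coord_scale)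
    also have "\<dots> = c j * top_coord (br (e m) (e j))"
    proof -
      have "(\<Sum>i\<in>{2..n-1} - {j}. c i * top_coord (br (e m) (e i))) = 0"
        by (rule sum.neutral) (use others in blast)
      then show ?thesis
        using sum.remove[of "{2..n-1}" j "\<lambda>i. c i * top_coord (br (e m) (e i))"] less.prems
        by simp
    qed
    finally show ?case
      using pair[OF m(1,2)] m(3) by simp
  qed
  show "y \<in> {0}"
    using c_zero by (simp add: y_eq)
qed

lemma dim_stabilizer_top_coord_le:
  assumes "2 \<le> n"
    and "\<And>i. 2 \<le> i \<Longrightarrow> i \<le> n - 1 \<Longrightarrow> top_coord (br (e i) (e (n + 1 - i))) \<noteq> 0"
  shows "dim (stabilizer br top_coord) \<le> 2"
proof -
  let ?T = "span (e ` {2..n-1})"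
  have "subspace (stabilizer br top_coord)"
    by (auto simp: subspace_def stabilizer_def br_add_right br_scale_right
        top_coord_add top_coord_scale)
  then have "dim (stabilizer br top_coord) + dim ?T
      = dim {x + y |x y. x \<in> stabilizer br top_coord \<and> y \<in> ?T}"
    using stabilizer_top_coord_Int_span_middle[OF assms(2)]
    by (intro dim_sums_eq_add_if_Int_zero[symmetric] subspace_span)
  also have "\<dots> \<le> n"
    using dim_subset[of _ UNIV] dim_UNIV_eq by simp
  finally have "dim (stabilizer br top_coord) + dim ?T \<le> n" .
  moreover have "dim ?T = n - 2"
  proof -
    have "independent (e ` {2..n-1})"
      using independent_basis by (rule independent_mono) auto
    moreover have "inj_on e {2..n-1}"
      using inj_on_basis by (rule inj_on_subset) auto
    ultimately show ?thesis
      using assms(1) by (simp add: dim_eq_card_independent card_image)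
  qed
  ultimately show ?thesis using assms(1) by linarith
qed

end

theorem proposition6p9:
  fixes scale :: "'k::field_char_0 \<Rightarrow> 'v::ab_group_add \<Rightarrow> 'v"
    and br :: "'v \<Rightarrow> 'v \<Rightarrow> 'v"
    and n :: nat and e :: "nat \<Rightarrow> 'v"
  assumes "4 \<le> n" and "even n"
    and "filiform scale br n"
    and "adapted_basis scale br n e"
    and "\<forall>i. 2 \<le> i \<and> i \<le> n - 1 \<longrightarrow> br (e i) (e (n + 1 - i)) = scale ((-1) ^ i) (e n)"
  shows "chi scale br = 2"
proof -
  interpret filiform_adapted scale br n e
    using assms(3,4) by unfold_locales
  have pair: "top_coord (br (e i) (e (n + 1 - i))) \<noteq> 0" if "2 \<le> i" "i \<le> n - 1" for i
    using assms(1,5) that by (simp add: top_coord_scale top_coord_basis)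
  have lower: "2 \<le> dim (stabilizer br l)" if "Vector_Spaces.linear scale (*) l" for l
    using two_le_dim_stabilizer assms(1,2) that by simp
  have "dim (stabilizer br top_coord) = 2"
    using lower[OF linear_top_coord] dim_stabilizer_top_coord_le[OF _ pair] assms(1) by simp
  then show ?thesis
    using chi_eqI[OF lower linear_top_coord] by simp
qed

end
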